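(* Let $B$ be a commutative ring with identity and $A$ a subring of $B$ containing the identity which is a dense subring of $B$ and a weak completely normal subring of $B$. Then for any two distinct maximal ideals $M, M'$ of $B$, $(M\cap A)+(M'\cap A)=A$.
   Context: $\operatorname{spec} A$ is the set of prime ideals of $A$ with the Zariski topology. A subring $A$ of $B$ is dense in $B$ if for every ideal $I$ of $B$ and every $b\in B\setminus \operatorname{rad}(I)$ there exists $a\in B\setminus\operatorname{rad}(I)$ with $ab\in A$. A subring $A$ of $B$ is a weak completely normal subring of $B$ if for any two distinct maximal ideals $M\neq M'$ of $B$ such that $M\cap A$ and $M'\cap A$ are non-comparable, $\operatorname{cl}_{\operatorname{spec} A}\{M\cap A\}\cap \operatorname{cl}_{\operatorname{spec} A}\{M'\cap A\}=\emptyset$. *)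

theory Defs
  imports "HOL-Algebra.Algebra"
begin

definition rad :: "('a, 'm) ring_scheme \<Rightarrow> 'a set \<Rightarrow> 'a set" where
  "rad R I = {x \<in> carrier R. \<exists>n::nat. x [^]\<^bsub>R\<^esub> n \<in> I}"

definition spec :: "('a, 'm) ring_scheme \<Rightarrow> 'a set set" where
  "spec R = {P. primeideal P R}"

definition zariski_closed :: "('a, 'm) ring_scheme \<Rightarrow> 'a set set \<Rightarrow> bool" where
  "zariski_closed R C \<longleftrightarrow> (\<exists>T. T \<subseteq> carrier R \<and> C = {P \<in> spec R. T \<subseteq> P})"

definition zariski_cl :: "('a, 'm) ring_scheme \<Rightarrow> 'a set set \<Rightarrow> 'a set set" where
  "zariski_cl R Y = {P. \<forall>C. zariski_closed R C \<and> Y \<subseteq> C \<longrightarrow> P \<in> C}"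

definition dense_subring :: "'a set \<Rightarrow> ('a, 'm) ring_scheme \<Rightarrow> bool" where
  "dense_subring A B \<longleftrightarrow>
     (\<forall>I. ideal I B \<longrightarrow> (\<forall>b \<in> carrier B - rad B I.
        \<exists>a \<in> carrier B - rad B I. a \<otimes>\<^bsub>B\<^esub> b \<in> A))"

definition weak_completely_normal_subring :: "'a set \<Rightarrow> ('a, 'm) ring_scheme \<Rightarrow> bool" where
  "weak_completely_normal_subring A B \<longleftrightarrow>
     (\<forall>M M'. maximalideal M B \<and> maximalideal M' B \<and> M \<noteq> M'
        \<and> \<not> (M \<inter> A \<subseteq> M' \<inter> A) \<and> \<not> (M' \<inter> A \<subseteq> M \<inter> A)
        \<longrightarrow> zariski_cl (B\<lparr>carrier := A\<rparr>) {M \<inter> A}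
              \<inter> zariski_cl (B\<lparr>carrier := A\<rparr>) {M' \<inter> A} = {})"

end

theory Submission
  imports Defs "HOL-Algebra.Ring_Divisibility"
begin

text \<open>
  Density forces the traces \<open>M \<inter> A\<close> and \<open>M' \<inter> A\<close> of distinct maximal ideals to be
  incomparable: for \<open>b \<in> M - M'\<close> density yields \<open>a \<notin> M'\<close> with \<open>a b \<in> A\<close>, and \<open>a b\<close> lies
  in \<open>M \<inter> A\<close> but not in the prime \<open>M'\<close>. Weak complete normality then makes the
  Zariski closures of the two traces in \<open>spec A\<close> disjoint. If the traces were not
  comaximal, a prime of \<open>A\<close> containing their sum would lie in both closures.
\<close>

lemma (in cring) exists_maximalideal_superset:
  assumes "ideal I R" "\<one> \<notin> I"
  shows "\<exists>M. maximalideal M R \<and> I \<subseteq> M"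
proof -
  define S where "S = {J. ideal J R \<and> I \<subseteq> J \<and> \<one> \<notin> J}"
  have "S \<noteq> {}" using assms unfolding S_def by blast
  moreover have "\<Union>C \<in> S" if "C \<noteq> {}" "subset.chain S C" for C
  proof -
    have ideal_chain: "subset.chain {J. ideal J R} C"
      using that(2) unfolding pred_on.chain_def S_def by auto
    have "ideal (\<Union>C) R" using chain_Union_is_ideal[OF ideal_chain] that(1) by simp
    moreover have "I \<subseteq> \<Union>C" using that unfolding pred_on.chain_def S_def by blast
    moreover have "\<one> \<notin> \<Union>C" using that unfolding pred_on.chain_def S_def by auto
    ultimately show ?thesis unfolding S_def by auto
  qed
  ultimately obtain M where M: "M \<in> S" and M_max: "\<And>J. J \<in> S \<Longrightarrow> M \<subseteq> J \<Longrightarrow> J = M"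
    using subset_Zorn_nonempty[of S] by blast
  have "maximalideal M R"
  proof (rule maximalidealI)
    show "ideal M R" "carrier R \<noteq> M" using M unfolding S_def by auto
    fix J assume J: "ideal J R" "M \<subseteq> J" "J \<subseteq> carrier R"
    show "J = M \<or> J = carrier R"
    proof (cases "\<one> \<in> J")
      case True then show ?thesis using ideal.one_imp_carrier[OF J(1)] by blast
    next
      case False
      then have "J \<in> S" using J M unfolding S_def by auto
      then show ?thesis using M_max J(2) by blast
    qed
  qed
  then show ?thesis using M unfolding S_def by blast
qed

lemma (in primeideal) rad_eq: "rad R I = I"
proof -
  have "x [^] n \<notin> I" if "x \<in> carrier R" "x \<notin> I" for x and n :: nat
    using that
  proof (induction n)
    case 0 then show ?case using I_notcarr one_imp_carrier by auto
  next
    case (Suc n) then show ?case using I_prime[of "x [^] n" x] by auto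
  qed
  moreover have "x [^] (1::nat) \<in> I" if "x \<in> I" for x
    using that by simp
  ultimately show ?thesis
    unfolding rad_def using Icarr by blast
qed

lemma (in maximalideal) not_subset_maximalideal:
  assumes "maximalideal M R" "M \<noteq> I"
  shows "\<not> I \<subseteq> M"
  using I_maximal[of M] maximalideal.axioms(1)[OF assms(1)] maximalideal.I_notcarr[OF assms(1)]
    ideal.Icarr[OF maximalideal.axioms(1)[OF assms(1)]] assms(2) by blast

lemma dense_subring_maximalideal_Int_not_subset:
  fixes B (structure)
  assumes "cring B" "dense_subring A B"
    and "maximalideal M B" "maximalideal M' B" "M \<noteq> M'"
  shows "\<not> M \<inter> A \<subseteq> M' \<inter> A"
proof
  assume sub: "M \<inter> A \<subseteq> M' \<inter> A"
  interpret M: maximalideal M B by fact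
  interpret M': primeideal M' B using cring.maximalideal_prime[OF assms(1,4)] .
  obtain b where b: "b \<in> M" "b \<notin> M'"
    using M.not_subset_maximalideal[OF assms(4)] assms(5) by blast
  then have "b \<in> carrier B - rad B M'" using M'.rad_eq M.Icarr by simp
  then obtain a where a: "a \<in> carrier B" "a \<notin> M'" "a \<otimes> b \<in> A"
    using assms(2) M'.is_ideal M'.rad_eq unfolding dense_subring_def by blast
  have "a \<otimes> b \<in> M" using M.I_l_closed b(1) a(1) .
  then have "a \<otimes> b \<in> M'" using sub a(3) by blast
  then show False using M'.I_prime a(1,2) b M.Icarr by blast
qed

lemma (in ring) ring_hom_ring_subring_inclusion:
  assumes "subring A R"
  shows "ring_hom_ring (R\<lparr>carrier := A\<rparr>) R id"
proof (rule ring_hom_ringI2)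
  show "ring (R\<lparr>carrier := A\<rparr>)" using subring_is_ring[OF assms] .
  show "ring R" by (rule ring_axioms)
  show "id \<in> ring_hom (R\<lparr>carrier := A\<rparr>) R"
    using subringE(1)[OF assms] by (intro ring_hom_memI) auto
qed

lemma (in cring) cring_subring:
  assumes "subring A R"
  shows "cring (R\<lparr>carrier := A\<rparr>)"
  using subcring_iff[OF subringE(1)[OF assms]] subcringI'[OF assms] by blast

lemma (in cring) primeideal_Int_subring:
  assumes "subring A R" "primeideal P R"
  shows "primeideal (P \<inter> A) (R\<lparr>carrier := A\<rparr>)"
proof -
  have "primeideal {r \<in> carrier (R\<lparr>carrier := A\<rparr>). id r \<in> P} (R\<lparr>carrier := A\<rparr>)"
    using ring_hom_ring.primeideal_vimage[OF ring_hom_ring_subring_inclusion[OF assms(1)]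
        cring_subring[OF assms(1)] assms(2)] .
  moreover have "{r \<in> carrier (R\<lparr>carrier := A\<rparr>). id r \<in> P} = P \<inter> A" by auto
  ultimately show ?thesis by simp
qed

lemma primeideal_in_zariski_cl_singleton:
  assumes "primeideal P R" "p \<subseteq> P"
  shows "P \<in> zariski_cl R {p}"
  using assms unfolding zariski_cl_def zariski_closed_def spec_def by blast

lemma (in cring) set_add_eq_carrier_if_disjoint_zariski_cl:
  assumes "ideal I R" "ideal J R"
    and "zariski_cl R {I} \<inter> zariski_cl R {J} = {}"
  shows "I <+> J = carrier R"
proof -
  have sum_ideal: "ideal (I <+> J) R" using add_ideals[OF assms(1,2)] .
  have "\<one> \<in> I <+> J"
  proof (rule ccontr)
    assume "\<one> \<notin> I <+> J"
    then obtain M where M: "maximalideal M R" "I <+>\<^bsub>R\<^esub> J \<subseteq> M"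
      using exists_maximalideal_superset[OF sum_ideal] by blast
    have "I \<union> J \<subseteq> carrier R"
      using ideal.Icarr[OF assms(1)] ideal.Icarr[OF assms(2)] by blast
    then have "I \<union> J \<subseteq> I <+>\<^bsub>R\<^esub> J"
      by (metis genideal_self union_genideal[OF assms(1,2)])
    then have "I \<subseteq> M" "J \<subseteq> M" using M(2) by auto
    then have "M \<in> zariski_cl R {I} \<inter> zariski_cl R {J}"
      by (simp add: primeideal_in_zariski_cl_singleton[OF maximalideal_prime[OF M(1)]])
    then show False using assms(3) by blast
  qed
  then show ?thesis using ideal.one_imp_carrier[OF sum_ideal] by blast
qed

theorem theorem4p5:
  fixes B :: "('a, 'm) ring_scheme" and A :: "'a set"
  assumes "cring B"
    and "subring A B"
    and "dense_subring A B"
    and "weak_completely_normal_subring A B"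
    and "maximalideal M B" and "maximalideal M' B" and "M \<noteq> M'"
  shows "(M \<inter> A) <+>\<^bsub>B\<^esub> (M' \<inter> A) = A"
proof -
  interpret B: cring B by fact
  let ?A = "B\<lparr>carrier := A\<rparr>"
  interpret A: cring ?A using B.cring_subring[OF assms(2)] .
  have trace_prime: "primeideal (N \<inter> A) ?A" if "maximalideal N B" for N
    using B.primeideal_Int_subring[OF assms(2) B.maximalideal_prime[OF that]] .
  have "\<not> M \<inter> A \<subseteq> M' \<inter> A" "\<not> M' \<inter> A \<subseteq> M \<inter> A"
    using dense_subring_maximalideal_Int_not_subset[OF assms(1,3)] assms(5-7) by auto
  then have "zariski_cl ?A {M \<inter> A} \<inter> zariski_cl ?A {M' \<inter> A} = {}"
    using assms(4-7) unfolding weak_completely_normal_subring_def by blast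
  then have "(M \<inter> A) <+>\<^bsub>?A\<^esub> (M' \<inter> A) = carrier ?A"
    using A.set_add_eq_carrier_if_disjoint_zariski_cl primeideal.axioms(1)
      trace_prime[OF assms(5)] trace_prime[OF assms(6)] by blast
  then show ?thesis unfolding set_add_def' by simp
qed

end
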